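(* Let $C_{1/3}$ be the middle-third Cantor set and $C(1/3)=C_{1/3}\times C_{1/3}$. Then the interior of $C(1/3)+S^1$ is non-empty.
   Context: $C_{1/3}=\{\tfrac23\sum_{k\ge1}a_k 3^{-(k-1)}: a_k\in\{0,1\}\}\subset[0,1]$; $S^1$ is the Euclidean unit circle in $\mathbb{R}^2$; $X+Y=\{x+y:x\in X,y\in Y\}$. *)

theory Defs
  imports "HOL-Analysis.Analysis"
begin

text \<open>Middle-third Cantor set, as in the paper: sums (2/3) * sum a_k 3^-(k-1), a_k in {0,1}, k>=1
  (indexed here from k = 0 with exponent 3^-k).\<close>
definition cantor_third :: "real set" where
  "cantor_third = {(2/3) * (\<Sum>k. real (a k) / 3 ^ k) | a :: nat \<Rightarrow> nat. \<forall>k. a k \<in> {0,1}}"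

definition cantor_square :: "(real \<times> real) set" where
  "cantor_square = cantor_third \<times> cantor_third"

definition unit_circle :: "(real \<times> real) set" where
  "unit_circle = {p. norm p = 1}"

definition minkowski_sum :: "'a::ab_group_add set \<Rightarrow> 'a set \<Rightarrow> 'a set" where
  "minkowski_sum X Y = {x + y | x y. x \<in> X \<and> y \<in> Y}"

end

theory Submission
  imports Defs
begin

text \<open>If a continuous function f is nondecreasing along the directions (-1,1) and (3,-1) on a
  square of the Cantor construction, with f \<le> c at its lower-left and c \<le> f at its upper-right
  corner, then one of its four subsquares inherits these corner inequalities. This is the argument
  behind C + C = [0,2], with lines replaced by level curves of slope between -1 and -1/3.
  The nested subsquares shrink to a point of C \<times> C on the level set f = c.
  For the squared distance to p, the monotonicity holds on the subsquare [0,1/3]^2 for all p in a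
  small open box, which therefore lies in C \<times> C + S^1.\<close>

lemma summable_digit_series:
  fixes a :: "nat \<Rightarrow> nat"
  assumes "\<forall>k. a k \<in> {0,1}"
  shows "summable (\<lambda>k. real (a k) / 3 ^ k)"
proof (rule summable_comparison_test)
  show "\<exists>N. \<forall>n\<ge>N. norm (real (a n) / 3 ^ n) \<le> (1/3) ^ n"
  proof (intro exI allI impI)
    fix n
    have "real (a n) \<le> 1"
      using assms[rule_format, of n] by auto
    then show "norm (real (a n) / 3 ^ n) \<le> (1/3) ^ n"
      by (simp add: power_divide divide_right_mono)
  qed
  show "summable (\<lambda>n. (1/3::real) ^ n)"
    by (rule summable_geometric) simp
qed

lemma cantor_third_divide_3:
  assumes "x \<in> cantor_third"
  shows "x / 3 \<in> cantor_third"
proof -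
  obtain a where a: "\<forall>k. a k \<in> {0,1}" and x: "x = (2/3) * (\<Sum>k. real (a k) / 3 ^ k)"
    using assms unfolding cantor_third_def by blast
  define b where "b k = (if k = 0 then 0 else a (k - 1))" for k
  have "summable (\<lambda>k. real (a k) / 3 ^ k)"
    using a by (rule summable_digit_series)
  then have "(\<lambda>k. real (a k) / 3 ^ k / 3) sums ((\<Sum>k. real (a k) / 3 ^ k) / 3)"
    by (intro sums_divide summable_sums)
  then have "(\<lambda>k. real (b (Suc k)) / 3 ^ Suc k) sums ((\<Sum>k. real (a k) / 3 ^ k) / 3)"
    by (simp add: b_def mult.commute)
  then have "(\<lambda>k. real (b k) / 3 ^ k) sums ((\<Sum>k. real (a k) / 3 ^ k) / 3)"
    by (intro sums_Suc_imp[where f = "\<lambda>k. real (b k) / 3 ^ k"]) (simp_all add: b_def)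
  then have "x / 3 = (2/3) * (\<Sum>k. real (b k) / 3 ^ k)"
    using x by (simp add: sums_iff)
  moreover have "\<forall>k. b k \<in> {0,1}" using a by (simp add: b_def)
  ultimately show ?thesis unfolding cantor_third_def by blast
qed

lemma cantor_third_limit:
  fixes X :: "nat \<Rightarrow> real"
  assumes "X 0 = 0" and steps: "\<And>n. X (Suc n) - X n \<in> {0, 2 / 3 ^ Suc n}"
  shows "\<exists>x \<in> cantor_third. X \<longlonglongrightarrow> x"
proof -
  define a :: "nat \<Rightarrow> nat" where "a k = (if X (Suc k) = X k then 0 else 1)" for k
  have partial: "X n = (2/3) * (\<Sum>k<n. real (a k) / 3 ^ k)" for n
  proof (induction n)
    case 0 show ?case using assms(1) by simp
  next
    case (Suc n) then show ?case using steps[of n] by (auto simp: a_def algebra_simps)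
  qed
  have "summable (\<lambda>k. real (a k) / 3 ^ k)"
    by (rule summable_digit_series) (simp add: a_def)
  then have "X \<longlonglongrightarrow> (2/3) * (\<Sum>k. real (a k) / 3 ^ k)"
    unfolding partial by (intro tendsto_mult_left summable_LIMSEQ)
  moreover have "\<forall>k. a k \<in> {0,1}" by (simp add: a_def)
  ultimately show ?thesis unfolding cantor_third_def by blast
qed

definition mono_along_directions :: "(real \<times> real \<Rightarrow> real) \<Rightarrow> bool" where
  "mono_along_directions f \<longleftrightarrow>
     (\<forall>u v t. 0 \<le> t \<longrightarrow> (u, v) \<in> {0..1} \<times> {0..1} \<longrightarrow> (u - t, v + t) \<in> {0..1} \<times> {0..1} \<longrightarrow>
        f (u, v) \<le> f (u - t, v + t)) \<and>
     (\<forall>u v t. 0 \<le> t \<longrightarrow> (u, v) \<in> {0..1} \<times> {0..1} \<longrightarrow> (u + 3 * t, v - t) \<in> {0..1} \<times> {0..1} \<longrightarrow>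
        f (u, v) \<le> f (u + 3 * t, v - t))"

definition straddling_square :: "(real \<times> real \<Rightarrow> real) \<Rightarrow> real \<Rightarrow> real \<Rightarrow> real \<Rightarrow> real \<Rightarrow> bool" where
  "straddling_square f c X Y h \<longleftrightarrow>
     0 \<le> X \<and> 0 \<le> Y \<and> X + h \<le> 1 \<and> Y + h \<le> 1 \<and> f (X, Y) \<le> c \<and> c \<le> f (X + h, Y + h)"

lemma straddling_subsquare:
  assumes mono: "mono_along_directions f" and sq: "straddling_square f c X Y h" and "0 < h"
  shows "\<exists>X' Y'. X' - X \<in> {0, 2 * h / 3} \<and> Y' - Y \<in> {0, 2 * h / 3} \<and>
           straddling_square f c X' Y' (h / 3)"
proof -
  have up_left: "f (u, v) \<le> f (u - t, v + t)"
    if "0 \<le> t" "(u, v) \<in> {0..1} \<times> {0..1}" "(u - t, v + t) \<in> {0..1} \<times> {0..1}" for u v t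
    using mono that unfolding mono_along_directions_def by blast
  have right_down: "f (u, v) \<le> f (u + 3 * t, v - t)"
    if "0 \<le> t" "(u, v) \<in> {0..1} \<times> {0..1}" "(u + 3 * t, v - t) \<in> {0..1} \<times> {0..1}" for u v t
    using mono that unfolding mono_along_directions_def by blast
  have box: "0 \<le> X" "0 \<le> Y" "X + h \<le> 1" "Y + h \<le> 1"
    and low: "f (X, Y) \<le> c" and high: "c \<le> f (X + h, Y + h)"
    using sq unfolding straddling_square_def by auto
  consider (ll) "c \<le> f (X + h/3, Y + h/3)"
    | (lr) "f (X + h/3, Y + h/3) < c" "c \<le> f (X + h, Y + h/3)"
    | (ul) "f (X + h, Y + h/3) < c" "c \<le> f (X + h/3, Y + h)"
    | (ur) "f (X + h/3, Y + h) < c"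
    by fastforce
  then show ?thesis
  proof cases
    case ll
    then have "straddling_square f c X Y (h/3)"
      using box low \<open>0 < h\<close> by (simp add: straddling_square_def)
    then show ?thesis by (intro exI[of _ X] exI[of _ Y]) simp
  next
    case lr
    have "f (X + 2*h/3, Y) \<le> f (X + h/3, Y + h/3)"
      using up_left[of "h/3" "X + 2*h/3" Y] box \<open>0 < h\<close> by (simp add: algebra_simps)
    then have "straddling_square f c (X + 2*h/3) Y (h/3)"
      using lr box \<open>0 < h\<close> by (simp add: straddling_square_def algebra_simps)
    then show ?thesis by (intro exI[of _ "X + 2*h/3"] exI[of _ Y]) simp
  next
    case ul
    have "f (X, Y + 2*h/3) \<le> f (X + h, Y + h/3)"
      using right_down[of "h/3" X "Y + 2*h/3"] box \<open>0 < h\<close> by (simp add: algebra_simps)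
    then have "straddling_square f c X (Y + 2*h/3) (h/3)"
      using ul box \<open>0 < h\<close> by (simp add: straddling_square_def algebra_simps)
    then show ?thesis by (intro exI[of _ X] exI[of _ "Y + 2*h/3"]) simp
  next
    case ur
    have "f (X + 2*h/3, Y + 2*h/3) \<le> f (X + h/3, Y + h)"
      using up_left[of "h/3" "X + 2*h/3" "Y + 2*h/3"] box \<open>0 < h\<close> by (simp add: algebra_simps)
    then have "straddling_square f c (X + 2*h/3) (Y + 2*h/3) (h/3)"
      using ur box high \<open>0 < h\<close> by (simp add: straddling_square_def algebra_simps)
    then show ?thesis by (intro exI[of _ "X + 2*h/3"] exI[of _ "Y + 2*h/3"]) simp
  qed
qed

lemma nested_straddling_squares:
  assumes mono: "mono_along_directions f" and "f (0, 0) \<le> c" "c \<le> f (1, 1)"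
  shows "\<exists>Z. \<forall>n. straddling_square f c (fst (Z n)) (snd (Z n)) (1 / 3 ^ n) \<and>
      fst (Z (Suc n)) - fst (Z n) \<in> {0, 2 / 3 ^ Suc n} \<and>
      snd (Z (Suc n)) - snd (Z n) \<in> {0, 2 / 3 ^ Suc n}"
proof (rule dependent_nat_choice)
  show "\<exists>Z. straddling_square f c (fst Z) (snd Z) (1 / 3 ^ 0)"
    using assms(2,3) by (intro exI[of _ "(0, 0)"]) (simp add: straddling_square_def)
next
  fix Z n
  assume "straddling_square f c (fst Z) (snd Z) (1 / 3 ^ n)"
  from straddling_subsquare[OF mono this] obtain X' Y'
    where "X' - fst Z \<in> {0, 2 / 3 ^ Suc n}" "Y' - snd Z \<in> {0, 2 / 3 ^ Suc n}"
      "straddling_square f c X' Y' (1 / 3 ^ Suc n)"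
    by (auto simp del: power_Suc simp add: power_Suc2)
  then show "\<exists>Z'. straddling_square f c (fst Z') (snd Z') (1 / 3 ^ Suc n) \<and>
      fst Z' - fst Z \<in> {0, 2 / 3 ^ Suc n} \<and> snd Z' - snd Z \<in> {0, 2 / 3 ^ Suc n}"
    by (intro exI[of _ "(X', Y')"]) simp
qed

lemma cantor_square_meets_level_set:
  assumes cont: "continuous_on ({0..1} \<times> {0..1}) f" and "mono_along_directions f"
    and "f (0, 0) \<le> c" "c \<le> f (1, 1)"
  shows "\<exists>x \<in> cantor_third. \<exists>y \<in> cantor_third. f (x, y) = c"
proof -
  obtain Z where sq: "\<And>n. straddling_square f c (fst (Z n)) (snd (Z n)) (1 / 3 ^ n)"
    and steps: "\<And>n. fst (Z (Suc n)) - fst (Z n) \<in> {0, 2 / 3 ^ Suc n}"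
      "\<And>n. snd (Z (Suc n)) - snd (Z n) \<in> {0, 2 / 3 ^ Suc n}"
    using nested_straddling_squares[OF assms(2-4)] by blast
  have "Z 0 = (0, 0)"
    using sq[of 0] by (simp add: straddling_square_def prod_eq_iff)
  then obtain x y where "x \<in> cantor_third" "y \<in> cantor_third"
    and "(\<lambda>n. fst (Z n)) \<longlonglongrightarrow> x" "(\<lambda>n. snd (Z n)) \<longlonglongrightarrow> y"
    using cantor_third_limit[of "\<lambda>n. fst (Z n)"] cantor_third_limit[of "\<lambda>n. snd (Z n)"] steps
    by auto
  then have lower: "Z \<longlonglongrightarrow> (x, y)"
    using tendsto_Pair by fastforce
  have side: "(\<lambda>n. 1 / 3 ^ n :: real) \<longlonglongrightarrow> 0"
    by (intro LIMSEQ_divide_realpow_zero) simp_all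
  have upper: "(\<lambda>n. Z n + (1 / 3 ^ n, 1 / 3 ^ n)) \<longlonglongrightarrow> (x, y)"
    using tendsto_add[OF lower tendsto_Pair[OF side side]] by simp
  have side_pos: "0 < (1 / 3 ^ n :: real)" for n
    by simp
  have lower_in: "Z n \<in> {0..1} \<times> {0..1}"
    and upper_in: "Z n + (1 / 3 ^ n, 1 / 3 ^ n) \<in> {0..1} \<times> {0..1}" for n
    using sq[of n] by (auto simp: straddling_square_def mem_Times_iff)
      (use side_pos[of n] in linarith)+
  have "(x, y) \<in> {0..1} \<times> {0..1}"
    by (rule closed_sequentially[OF _ _ lower]) (simp_all add: closed_Times lower_in)
  have "f (x, y) \<le> c"
  proof (rule LIMSEQ_le_const2)
    show "(\<lambda>n. f (Z n)) \<longlonglongrightarrow> f (x, y)"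
      using continuous_on_tendsto_compose[OF cont lower] lower_in \<open>(x, y) \<in> _\<close> by simp
    show "\<exists>N. \<forall>n\<ge>N. f (Z n) \<le> c"
      using sq by (simp add: straddling_square_def)
  qed
  moreover have "c \<le> f (x, y)"
  proof (rule LIMSEQ_le_const)
    show "(\<lambda>n. f (Z n + (1 / 3 ^ n, 1 / 3 ^ n))) \<longlonglongrightarrow> f (x, y)"
      using continuous_on_tendsto_compose[OF cont upper] upper_in \<open>(x, y) \<in> _\<close> by simp
    show "\<exists>N. \<forall>n\<ge>N. c \<le> f (Z n + (1 / 3 ^ n, 1 / 3 ^ n))"
      using sq by (simp add: straddling_square_def plus_prod_def)
  qed
  ultimately show ?thesis
    using \<open>x \<in> cantor_third\<close> \<open>y \<in> cantor_third\<close> by fastforce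
qed

lemma cantor_square_plus_circle_contains:
  assumes p1: "-49/100 < p1" "p1 < -47/100" and p2: "-85/100 < p2" "p2 < -83/100"
  shows "(p1, p2) \<in> minkowski_sum cantor_square unit_circle"
proof -
  define f where "f z = (fst z / 3 - p1)\<^sup>2 + (snd z / 3 - p2)\<^sup>2" for z :: "real \<times> real"
  have "\<exists>x \<in> cantor_third. \<exists>y \<in> cantor_third. f (x, y) = 1"
  proof (rule cantor_square_meets_level_set)
    show "continuous_on ({0..1} \<times> {0..1}) f"
      unfolding f_def by (intro continuous_intros) simp_all
  next
    have "f (u, v) \<le> f (u - t, v + t) \<and> f (u, v) \<le> f (u + 3 * t, v - t)"
      if "0 \<le> t" "(u, v) \<in> {0..1} \<times> {0..1}" for u v t
    proof -
      have "0 \<le> t * ((v/3 - p2) - (u/3 - p1))" "0 \<le> t * (3 * (u/3 - p1) - (v/3 - p2))"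
        using that p1 p2 by auto
      moreover have "f (u - t, v + t) = f (u, v) + 2/3 * t * ((v/3 - p2) - (u/3 - p1)) + 2/9 * t\<^sup>2"
        "f (u + 3 * t, v - t) = f (u, v) + 2/3 * t * (3 * (u/3 - p1) - (v/3 - p2)) + 10/9 * t\<^sup>2"
        unfolding f_def by (simp_all add: power2_eq_square field_simps)
      ultimately show ?thesis
        by (simp add: zero_le_power2)
    qed
    then show "mono_along_directions f"
      unfolding mono_along_directions_def by blast
  next
    have "p1\<^sup>2 \<le> (49/100)\<^sup>2" "p2\<^sup>2 \<le> (85/100)\<^sup>2"
      using power_mono[of "-p1" "49/100" 2] power_mono[of "-p2" "85/100" 2] p1 p2 by simp_all
    then show "f (0, 0) \<le> 1"
      by (simp add: f_def power2_eq_square)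
  next
    have "1 \<le> (1/3 - p2)\<^sup>2"
      using power_mono[of 1 "1/3 - p2" 2] p2 by simp
    then show "1 \<le> f (1, 1)"
      by (simp add: f_def add_increasing)
  qed
  then obtain x y where "x \<in> cantor_third" "y \<in> cantor_third" and xy: "f (x, y) = 1"
    by blast
  then have "(x / 3, y / 3) \<in> cantor_square"
    by (simp add: cantor_square_def cantor_third_divide_3)
  moreover have "(p1 - x / 3, p2 - y / 3) \<in> unit_circle"
    using xy by (simp add: unit_circle_def norm_Pair f_def power2_commute)
  moreover have "(p1, p2) = (x / 3, y / 3) + (p1 - x / 3, p2 - y / 3)"
    by simp
  ultimately show ?thesis
    unfolding minkowski_sum_def by blast
qed

theorem mainTheorem4:
  shows "interior (minkowski_sum cantor_square unit_circle) \<noteq> {}"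
proof -
  let ?U = "{-49/100<..<-47/100 :: real} \<times> {-85/100<..<-83/100 :: real}"
  have "?U \<subseteq> minkowski_sum cantor_square unit_circle"
    using cantor_square_plus_circle_contains by auto
  then have "?U \<subseteq> interior (minkowski_sum cantor_square unit_circle)"
    by (simp add: interior_maximal open_Times)
  moreover have "(-48/100, -84/100) \<in> ?U"
    by simp
  ultimately show ?thesis
    by blast
qed

end
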